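(* Let $\Phi=\vec a_1\wedge\cdots\wedge\vec a_m$, and let $\hat\Phi$ be its pruned formula. For $1\le M\le m$ define $$\Delta(M)=\mathbb{E}\left[\log\frac{Z(\hat\Phi_1(M,m-M))}{Z(\hat\Phi_1(M-1,m-M))}\cdot\log\frac{Z(\hat\Phi_2(M,m-M))}{Z(\hat\Phi_2(M-1,m-M))}\right],$$ $$\Delta'(M)=\mathbb{E}\left[\log\frac{Z(\hat\Phi_1(M-1,m-M+1))}{Z(\hat\Phi_1(M-1,m-M))}\cdot\log\frac{Z(\hat\Phi_2(M-1,m-M+1))}{Z(\hat\Phi_2(M-1,m-M))}\right].$$ Then $$\mathrm{Var}[\log Z(\hat\Phi)]=\sum_{M=1}^m\big(\Delta(M)-\Delta'(M)\big).$$
   Context: A 2-CNF is a conjunction of clauses, each the disjunction of two literals on two distinct variables. $Z(\cdot)$ denotes the number of satisfying assignments. Fix $0<d<2$ and $m=m_n\sim dn/2$. A uniformly random clause is drawn uniformly from the $4\binom n2$ clauses on two distinct variables among $x_1,\dots,x_n$. Let $(\vec a_i)_{i\ge1}$, $(\vec a'_i)_{i\ge1}$, $(\vec a''_i)_{i\ge1}$ be mutually independent sequences of independent uniformly random clauses. For integers $M,M'\ge0$ set $$\Phi_1(M,M')=\vec a_1\wedge\cdots\wedge\vec a_M\wedge\vec a'_1\wedge\cdots\wedge\vec a'_{M'},\qquad \Phi_2(M,M')=\vec a_1\wedge\cdots\wedge\vec a_M\wedge\vec a''_1\wedge\cdots\wedge\vec a''_{M'}.$$ Write $\hat\Phi_h(M,M')$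 for the pruned formula of $\Phi_h(M,M')$. Pruning is defined as follows. For a 2-CNF $\Psi$ and a set $\mathcal L_0$ of literals, let $\mathcal L(\Psi,\mathcal L_0)$ be the closure of $\mathcal L_0$ under: if $\Psi$ has a clause $l\vee\neg l'$ with $l'\in\mathcal L$, add $l$. Let $\mathcal V_0$ be the set of variables $x$ with both $x,\neg x\in\mathcal L(\Psi,\mathcal L_0)$. The conflict clauses $\mathcal C(\Psi,\mathcal L_0)$ are the clauses of $\Psi$ both of whose variables lie in $\mathcal V_0$. Then $\hat\Psi$ is $\Psi$ with all clauses in $\bigcup_l\mathcal C(\Psi,\{l\})$ removed, $l$ ranging over all literals. Pruned formulas are always satisfiable. *)

theory Defs
  imports "HOL-Probability.Probability"
begin

text \<open>Variables are natural numbers; x_1,...,x_n are represented by 0,...,n-1.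
  A literal is a pair (variable, sign); (x, True) is x and (x, False) is the negation of x.\<close>

type_synonym lit = "nat \<times> bool"
type_synonym clause = "lit set"
type_synonym cnf = "clause list"

definition neg_lit :: "lit \<Rightarrow> lit" where
  "neg_lit l = (fst l, \<not> snd l)"

definition clauses :: "nat \<Rightarrow> clause set" where
  "clauses n = {c. \<exists>u v su sv. u < n \<and> v < n \<and> u \<noteq> v \<and> c = {(u, su), (v, sv)}}"

definition lit_sat :: "nat set \<Rightarrow> lit \<Rightarrow> bool" where
  "lit_sat \<sigma> l = ((fst l \<in> \<sigma>) = snd l)"

text \<open>Assignments of x_1..x_n: the set of variables set to true.\<close>
definition Z :: "nat \<Rightarrow> cnf \<Rightarrow> nat" where
  "Z n \<Psi> = card {\<sigma>. \<sigma> \<subseteq> {..<n} \<and> (\<forall>c\<in>set \<Psi>. \<exists>l\<in>c. lit_sat \<sigma> l)}"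

inductive_set lit_closure :: "cnf \<Rightarrow> lit set \<Rightarrow> lit set" for \<Psi> L0 where
  base: "l \<in> L0 \<Longrightarrow> l \<in> lit_closure \<Psi> L0"
| step: "l' \<in> lit_closure \<Psi> L0 \<Longrightarrow> {l, neg_lit l'} \<in> set \<Psi> \<Longrightarrow> l \<in> lit_closure \<Psi> L0"

definition conflict_vars :: "cnf \<Rightarrow> lit set \<Rightarrow> nat set" where
  "conflict_vars \<Psi> L0 = {x. (x, True) \<in> lit_closure \<Psi> L0 \<and> (x, False) \<in> lit_closure \<Psi> L0}"

definition conflict_clauses :: "cnf \<Rightarrow> lit set \<Rightarrow> clause set" where
  "conflict_clauses \<Psi> L0 = {c \<in> set \<Psi>. \<forall>l\<in>c. fst l \<in> conflict_vars \<Psi> L0}"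

definition prune :: "cnf \<Rightarrow> cnf" where
  "prune \<Psi> = filter (\<lambda>c. c \<notin> (\<Union>l. conflict_clauses \<Psi> {l})) \<Psi>"

text \<open>Sample space: three independent sequences (a, a', a'') of m i.i.d. uniform clauses each
  (only the first m entries of each sequence are ever used).\<close>
definition clause_seqs :: "nat \<Rightarrow> nat \<Rightarrow> clause list set" where
  "clause_seqs n m = {xs. length xs = m \<and> set xs \<subseteq> clauses n}"

definition sample :: "nat \<Rightarrow> nat \<Rightarrow> (clause list \<times> clause list \<times> clause list) pmf" where
  "sample n m = pmf_of_set (clause_seqs n m \<times> clause_seqs n m \<times> clause_seqs n m)"

definition Phi1 :: "clause list \<times> clause list \<times> clause list \<Rightarrow> nat \<Rightarrow> nat \<Rightarrow> cnf" where
  "Phi1 \<omega> M M' = (case \<omega> of (a, a', a'') \<Rightarrow> take M a @ take M' a')"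

definition Phi2 :: "clause list \<times> clause list \<times> clause list \<Rightarrow> nat \<Rightarrow> nat \<Rightarrow> cnf" where
  "Phi2 \<omega> M M' = (case \<omega> of (a, a', a'') \<Rightarrow> take M a @ take M' a'')"

definition logZ :: "nat \<Rightarrow> cnf \<Rightarrow> real" where
  "logZ n \<Psi> = ln (real (Z n (prune \<Psi>)))"

definition Delta :: "nat \<Rightarrow> nat \<Rightarrow> nat \<Rightarrow> real" where
  "Delta n m M = measure_pmf.expectation (sample n m) (\<lambda>\<omega>.
      ln (real (Z n (prune (Phi1 \<omega> M (m - M)))) / real (Z n (prune (Phi1 \<omega> (M - 1) (m - M)))))
    * ln (real (Z n (prune (Phi2 \<omega> M (m - M)))) / real (Z n (prune (Phi2 \<omega> (M - 1) (m - M))))))"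

definition Delta' :: "nat \<Rightarrow> nat \<Rightarrow> nat \<Rightarrow> real" where
  "Delta' n m M = measure_pmf.expectation (sample n m) (\<lambda>\<omega>.
      ln (real (Z n (prune (Phi1 \<omega> (M - 1) (m - M + 1)))) / real (Z n (prune (Phi1 \<omega> (M - 1) (m - M)))))
    * ln (real (Z n (prune (Phi2 \<omega> (M - 1) (m - M + 1)))) / real (Z n (prune (Phi2 \<omega> (M - 1) (m - M))))))"

end

theory Submission
  imports Defs
begin

text \<open>Let \<open>G(M)\<close> be the joint moment \<open>E[log Z(\<Phi>\<^sub>1(M, m-M)) log Z(\<Phi>\<^sub>2(M, m-M))]\<close> of two
  pruned formulas sharing their first \<open>M\<close> clauses. Then \<open>G(m) = E[(log Z(\<Phi>))\<^sup>2]\<close>, and for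
  \<open>M = 0\<close> the two formulas are independent, so \<open>G(0) = E[log Z(\<Phi>)]\<^sup>2\<close>: the variance telescopes
  into \<open>\<Sum> (G(M) - G(M-1))\<close>. Expanding \<open>\<Delta>(M) - \<Delta>'(M)\<close> gives \<open>G(M) - G(M-1)\<close> plus two cross
  terms, which cancel because exchanging the shared clause \<open>a\<^sub>M\<close> with the private clause
  \<open>a'\<^bsub>m-M+1\<^esub>\<close> preserves the distribution and does not change the relevant formulas as sets of
  clauses. Pruning is needed only to split the logarithms of the ratios: a pruned 2-CNF has no
  literal implying its negation, hence is satisfiable, so all partition functions are positive.\<close>

section \<open>Implication closure of 2-CNFs\<close>

lemma neg_lit_neg_lit [simp]: "neg_lit (neg_lit l) = l"
  by (simp add: neg_lit_def)

lemma neg_lit_neq [simp]: "neg_lit l \<noteq> l" "l \<noteq> neg_lit l"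
  by (auto simp: neg_lit_def prod_eq_iff)

lemma lit_eq_or_neg_lit: "fst l = fst l' \<Longrightarrow> l = l' \<or> l = neg_lit l'"
  by (cases l; cases l') (auto simp: neg_lit_def)

lemma lit_closure_mono: "l \<in> lit_closure \<Psi> L \<Longrightarrow> set \<Psi> \<subseteq> set \<Psi>' \<Longrightarrow> l \<in> lit_closure \<Psi>' L"
  by (induction rule: lit_closure.induct) (auto intro: lit_closure.intros)

lemma lit_closure_cong_set: "set \<Psi> = set \<Psi>' \<Longrightarrow> lit_closure \<Psi> = lit_closure \<Psi>'"
  by (intro ext) (auto intro: lit_closure_mono)

lemma lit_closure_trans: "l \<in> lit_closure \<Psi> A \<Longrightarrow> A \<subseteq> lit_closure \<Psi> B \<Longrightarrow> l \<in> lit_closure \<Psi> B"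
  by (induction rule: lit_closure.induct) (auto intro: lit_closure.intros)

lemma lit_closure_contrapos: "l \<in> lit_closure \<Psi> {l'} \<Longrightarrow> neg_lit l' \<in> lit_closure \<Psi> {neg_lit l}"
proof (induction rule: lit_closure.induct)
  case (base l)
  then show ?case by (auto intro: lit_closure.base)
next
  case (step l' l)
  have "neg_lit l' \<in> lit_closure \<Psi> {neg_lit l}"
    by (rule lit_closure.step[of "neg_lit l"]) (auto intro: lit_closure.base simp: insert_commute step.hyps)
  then show ?case using step.IH lit_closure_trans by blast
qed

lemma lit_closure_consistent:
  assumes "\<forall>l. neg_lit l \<notin> lit_closure \<Psi> {l}" and "z \<in> lit_closure \<Psi> {a}"
  shows "neg_lit z \<notin> lit_closure \<Psi> {a}"
proof
  assume "neg_lit z \<in> lit_closure \<Psi> {a}"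
  then have "neg_lit a \<in> lit_closure \<Psi> {z}"
    using lit_closure_contrapos by fastforce
  then have "neg_lit a \<in> lit_closure \<Psi> {a}"
    using assms(2) lit_closure_trans by blast
  with assms(1) show False by blast
qed

lemma clause_meets_lit_closure:
  assumes "{x, r} \<in> set \<Psi>" and "fst x \<in> fst ` lit_closure \<Psi> A"
  shows "x \<in> lit_closure \<Psi> A \<or> r \<in> lit_closure \<Psi> A"
proof -
  obtain y where y: "y \<in> lit_closure \<Psi> A" "fst y = fst x"
    using assms(2) by auto
  show ?thesis
  proof (cases "y = x")
    case False
    then have "neg_lit x \<in> lit_closure \<Psi> A"
      using y lit_eq_or_neg_lit by blast
    then have "r \<in> lit_closure \<Psi> A"
      by (rule lit_closure.step) (use assms(1) in \<open>simp add: insert_commute\<close>)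
    then show ?thesis ..
  qed (use y in blast)
qed

section \<open>Satisfiability of pruned formulas\<close>

lemma assignment_satisfying_consistent_lits:
  assumes "\<And>z. z \<in> L \<Longrightarrow> neg_lit z \<notin> L"
  obtains \<sigma> where "\<And>l. l \<in> L \<Longrightarrow> lit_sat \<sigma> l"
    and "\<And>l. fst l \<notin> fst ` L \<Longrightarrow> lit_sat \<sigma> l = lit_sat \<sigma>' l"
proof
  define \<sigma> where "\<sigma> = {v \<in> fst ` L. (v, True) \<in> L} \<union> (\<sigma>' - fst ` L)"
  show "lit_sat \<sigma> l" if "l \<in> L" for l
  proof (cases l)
    case (Pair v s)
    then show ?thesis
      using that assms[of l] by (cases s) (force simp: lit_sat_def \<sigma>_def neg_lit_def)+
  qed
  show "lit_sat \<sigma> l = lit_sat \<sigma>' l" if "fst l \<notin> fst ` L" for l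
    using that by (auto simp: lit_sat_def \<sigma>_def)
qed

text \<open>Setting every literal implied by a literal \<open>a\<close> to true satisfies every clause touching
  those variables; the remaining clauses form a smaller formula with the same hypothesis.\<close>

lemma two_cnf_satisfiable:
  assumes "\<forall>c\<in>set \<Psi>. \<exists>a b. c = {a, b}"
    and "\<forall>l. neg_lit l \<notin> lit_closure \<Psi> {l}"
  shows "\<exists>\<sigma>. \<forall>c\<in>set \<Psi>. \<exists>l\<in>c. lit_sat \<sigma> l"
  using assms
proof (induction "length \<Psi>" arbitrary: \<Psi> rule: less_induct)
  case less
  show ?case
  proof (cases \<Psi>)
    case Cons
    then obtain a b where ab: "{a, b} \<in> set \<Psi>"
      using less.prems(1) by auto
    define L where "L = lit_closure \<Psi> {a}"
    define \<Psi>' where "\<Psi>' = filter (\<lambda>c. \<forall>x\<in>c. fst x \<notin> fst ` L) \<Psi>"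
    have "a \<in> L"
      by (auto simp: L_def intro: lit_closure.base)
    then have "length \<Psi>' < length \<Psi>"
      unfolding \<Psi>'_def using ab by (intro length_filter_less) auto
    moreover have sub: "set \<Psi>' \<subseteq> set \<Psi>"
      by (auto simp: \<Psi>'_def)
    then have "\<forall>c\<in>set \<Psi>'. \<exists>a b. c = {a, b}"
      using less.prems(1) by blast
    moreover have "\<forall>l. neg_lit l \<notin> lit_closure \<Psi>' {l}"
      using less.prems(2) sub lit_closure_mono by blast
    ultimately obtain \<sigma>' where \<sigma>': "\<forall>c\<in>set \<Psi>'. \<exists>l\<in>c. lit_sat \<sigma>' l"
      using less.hyps by blast
    have "\<And>z. z \<in> L \<Longrightarrow> neg_lit z \<notin> L"
      using lit_closure_consistent[OF less.prems(2)] by (simp add: L_def)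
    then obtain \<sigma> where sat_L: "\<And>l. l \<in> L \<Longrightarrow> lit_sat \<sigma> l"
      and sat_rest: "\<And>l. fst l \<notin> fst ` L \<Longrightarrow> lit_sat \<sigma> l = lit_sat \<sigma>' l"
      using assignment_satisfying_consistent_lits[where \<sigma>' = \<sigma>'] by blast
    have "\<exists>l\<in>c. lit_sat \<sigma> l" if c: "c \<in> set \<Psi>" for c
    proof (cases "c \<in> set \<Psi>'")
      case True
      then show ?thesis
        using \<sigma>' sat_rest by (fastforce simp: \<Psi>'_def)
    next
      case False
      then obtain x where x: "x \<in> c" "fst x \<in> fst ` L"
        using c by (auto simp: \<Psi>'_def)
      obtain a' b' where "c = {a', b'}"
        using less.prems(1) c by blast
      define r where "r = (if x = a' then b' else a')"
      have r: "c = {x, r}"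
        using x(1) \<open>c = {a', b'}\<close> by (auto simp: r_def)
      then have "x \<in> L \<or> r \<in> L"
        using c x(2) clause_meets_lit_closure[of x r \<Psi> "{a}"] by (simp add: L_def)
      then show ?thesis
        using sat_L r by blast
    qed
    then show ?thesis by blast
  qed simp
qed

lemma prune_closure_consistent: "neg_lit l \<notin> lit_closure (prune \<Psi>) {l}"
proof
  assume "neg_lit l \<in> lit_closure (prune \<Psi>) {l}"
  then obtain l' where l': "l' \<in> lit_closure (prune \<Psi>) {l}"
    and c: "{neg_lit l, neg_lit l'} \<in> set (prune \<Psi>)"
    by (cases rule: lit_closure.cases) auto
  define L where "L = lit_closure \<Psi> {l}"
  have sub: "set (prune \<Psi>) \<subseteq> set \<Psi>"
    by (auto simp: prune_def)
  have c_in: "{neg_lit l, neg_lit l'} \<in> set \<Psi>"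
    using c sub by blast
  have "l \<in> L" "l' \<in> L"
    unfolding L_def using l' sub by (auto intro: lit_closure.base lit_closure_mono)
  moreover have "neg_lit l \<in> L" "neg_lit l' \<in> L"
    unfolding L_def using c_in calculation[unfolded L_def]
    by (auto intro: lit_closure.step simp: insert_commute)
  moreover have "fst k \<in> conflict_vars \<Psi> {l}" if "k \<in> L" "neg_lit k \<in> L" for k
  proof (cases k)
    case (Pair v s)
    then show ?thesis
      using that unfolding conflict_vars_def L_def by (cases s) (auto simp: neg_lit_def)
  qed
  ultimately have "{neg_lit l, neg_lit l'} \<in> conflict_clauses \<Psi> {l}"
    using c_in by (auto simp: conflict_clauses_def neg_lit_def)
  moreover have "{neg_lit l, neg_lit l'} \<notin> (\<Union>l. conflict_clauses \<Psi> {l})"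
    using c by (simp add: prune_def)
  ultimately show False
    by blast
qed

lemma Z_prune_pos:
  assumes "set \<Psi> \<subseteq> clauses n"
  shows "Z n (prune \<Psi>) > 0"
proof -
  have sub: "set (prune \<Psi>) \<subseteq> clauses n"
    using assms by (auto simp: prune_def)
  then have "\<forall>c\<in>set (prune \<Psi>). \<exists>a b. c = {a, b}"
    unfolding clauses_def by blast
  then obtain \<sigma> where \<sigma>: "\<forall>c\<in>set (prune \<Psi>). \<exists>l\<in>c. lit_sat \<sigma> l"
    using two_cnf_satisfiable prune_closure_consistent by blast
  have "lit_sat (\<sigma> \<inter> {..<n}) l = lit_sat \<sigma> l" if "l \<in> c" "c \<in> set (prune \<Psi>)" for l c
    using that sub by (auto simp: clauses_def lit_sat_def)
  then have "\<sigma> \<inter> {..<n} \<in> {\<sigma>. \<sigma> \<subseteq> {..<n} \<and> (\<forall>c\<in>set (prune \<Psi>). \<exists>l\<in>c. lit_sat \<sigma> l)}"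
    using \<sigma> by auto
  moreover have "finite {\<sigma>. \<sigma> \<subseteq> {..<n} \<and> (\<forall>c\<in>set (prune \<Psi>). \<exists>l\<in>c. lit_sat \<sigma> l)}"
    by (rule finite_subset[of _ "Pow {..<n}"]) auto
  ultimately show ?thesis
    unfolding Z_def using card_gt_0_iff by blast
qed

lemma logZ_cong_set:
  assumes "set \<Psi> = set \<Psi>'"
  shows "logZ n \<Psi> = logZ n \<Psi>'"
proof -
  have "conflict_clauses \<Psi> = conflict_clauses \<Psi>'"
    using assms lit_closure_cong_set[OF assms]
    by (intro ext) (simp add: conflict_clauses_def conflict_vars_def)
  then have "set (prune \<Psi>) = set (prune \<Psi>')"
    using assms by (simp add: prune_def)
  then show ?thesis
    by (simp add: logZ_def Z_def)
qed

lemma ln_Z_prune_ratio: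
  assumes "set \<Psi> \<subseteq> clauses n" "set \<Psi>' \<subseteq> clauses n"
  shows "ln (real (Z n (prune \<Psi>)) / real (Z n (prune \<Psi>'))) = logZ n \<Psi> - logZ n \<Psi>'"
  using Z_prune_pos[OF assms(1)] Z_prune_pos[OF assms(2)] by (simp add: logZ_def ln_div)

lemma expectation_pmf_cong:
  "(\<And>x. x \<in> set_pmf p \<Longrightarrow> f x = g x) \<Longrightarrow>
    measure_pmf.expectation p f = measure_pmf.expectation p (g :: _ \<Rightarrow> real)"
  by (rule integral_cong_AE) (auto simp: AE_measure_pmf_iff)

lemma map_pmf_of_set_bij:
  assumes "finite S" "S \<noteq> {}" "bij_betw g S S"
  shows "map_pmf g (pmf_of_set S) = pmf_of_set S"
  using assms map_pmf_of_set_inj[of g S] by (simp add: bij_betw_def)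

lemma expectation_pmf_of_set_Times:
  fixes f :: "'a \<Rightarrow> real" and g :: "'b \<Rightarrow> real"
  assumes "finite A" "A \<noteq> {}" "finite B" "B \<noteq> {}"
  shows "measure_pmf.expectation (pmf_of_set (A \<times> B)) (\<lambda>(x, y). f x * g y) =
    measure_pmf.expectation (pmf_of_set A) f * measure_pmf.expectation (pmf_of_set B) g"
  using assms
  by (simp add: integral_pmf_of_set sum.cartesian_product[symmetric] sum_product
      card_cartesian_product)

section \<open>The random formulas\<close>

lemma finite_clause_seqs: "finite (clause_seqs n m)"
proof -
  have "finite (clauses n)"
    by (rule finite_subset[of _ "Pow ({..<n} \<times> UNIV)"]) (auto simp: clauses_def)
  then show ?thesis
    unfolding clause_seqs_def using finite_lists_length_eq by (simp add: conj_commute)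
qed

lemma clause_seqs_nonempty:
  assumes "2 \<le> n"
  shows "clause_seqs n m \<noteq> {}"
proof -
  have "{(0, True), (1, True)} \<in> clauses n"
    using assms unfolding clauses_def
    by (intro CollectI exI[of _ 0] exI[of _ 1] exI[of _ True]) simp
  then have "replicate m {(0, True), (1, True)} \<in> clause_seqs n m"
    by (auto simp: clause_seqs_def)
  then show ?thesis by blast
qed

lemma set_pmf_sample:
  "2 \<le> n \<Longrightarrow> set_pmf (sample n m) = clause_seqs n m \<times> clause_seqs n m \<times> clause_seqs n m"
  by (simp add: sample_def finite_clause_seqs clause_seqs_nonempty)

lemma integrable_sample: "2 \<le> n \<Longrightarrow> integrable (sample n m) (f :: _ \<Rightarrow> real)"
  by (rule integrable_measure_pmf_finite) (simp add: set_pmf_sample finite_clause_seqs)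

lemma expectation_sample_bij:
  assumes "2 \<le> n" "bij_betw g (set_pmf (sample n m)) (set_pmf (sample n m))"
  shows "measure_pmf.expectation (sample n m) (\<lambda>\<omega>. f (g \<omega>)) =
    measure_pmf.expectation (sample n m) (f :: _ \<Rightarrow> real)"
proof -
  have "map_pmf g (sample n m) = sample n m"
    using assms map_pmf_of_set_bij[of _ g]
    by (simp add: set_pmf_sample sample_def finite_clause_seqs clause_seqs_nonempty)
  then show ?thesis
    using integral_map_pmf[of g "sample n m" f] by simp
qed

lemma set_Phi_sample:
  assumes "\<omega> \<in> set_pmf (sample n m)" "2 \<le> n"
  shows "set (Phi1 \<omega> M M') \<subseteq> clauses n" "set (Phi2 \<omega> M M') \<subseteq> clauses n"
proof -
  obtain a b c where "\<omega> = (a, b, c)" "set a \<subseteq> clauses n" "set b \<subseteq> clauses n" "set c \<subseteq> clauses n"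
    using assms by (cases \<omega>) (auto simp: set_pmf_sample clause_seqs_def)
  then show "set (Phi1 \<omega> M M') \<subseteq> clauses n" "set (Phi2 \<omega> M M') \<subseteq> clauses n"
    by (simp_all add: Phi1_def Phi2_def) (meson order_trans set_take_subset)+
qed

lemma Phi1_mirror: "Phi1 (case \<omega> of (a, b, c) \<Rightarrow> (a, c, b)) M M' = Phi2 \<omega> M M'"
  and Phi2_mirror: "Phi2 (case \<omega> of (a, b, c) \<Rightarrow> (a, c, b)) M M' = Phi1 \<omega> M M'"
  by (simp_all add: Phi1_def Phi2_def split: prod.splits)

lemma expectation_sample_mirror:
  assumes "2 \<le> n"
  shows "measure_pmf.expectation (sample n m) (\<lambda>\<omega>. H (Phi1 \<omega> M M') (Phi2 \<omega> N N')) =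
    measure_pmf.expectation (sample n m) (\<lambda>\<omega>. (H (Phi2 \<omega> M M') (Phi1 \<omega> N N') :: real))"
proof -
  have "bij_betw (\<lambda>(a, b, c). (a, c, b)) (set_pmf (sample n m)) (set_pmf (sample n m))"
    by (rule bij_betw_byWitness[where f' = "\<lambda>(a, b, c). (a, c, b)"])
      (auto simp: set_pmf_sample assms)
  from expectation_sample_bij[OF assms this, of "\<lambda>\<omega>. H (Phi2 \<omega> M M') (Phi1 \<omega> N N')"]
  show ?thesis
    by (simp add: Phi1_mirror Phi2_mirror)
qed

text \<open>Swaps the shared clause \<open>a\<^bsub>i+1\<^esub>\<close> with the private clause \<open>a'\<^bsub>j+1\<^esub>\<close> of the first formula.\<close>

definition exchange :: "nat \<Rightarrow> nat \<Rightarrow> clause list \<times> clause list \<times> clause list \<Rightarrow>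
    clause list \<times> clause list \<times> clause list" where
  "exchange i j = (\<lambda>(a, b, c). (a[i := b ! j], b[j := a ! i], c))"

lemma exchange_exchange:
  "i < length a \<Longrightarrow> j < length b \<Longrightarrow> exchange i j (exchange i j (a, b, c)) = (a, b, c)"
  by (simp add: exchange_def)

lemma exchange_in_sample:
  assumes "(a, b, c) \<in> set_pmf (sample n m)" "2 \<le> n" "i < m" "j < m"
  shows "exchange i j (a, b, c) \<in> set_pmf (sample n m)"
proof -
  have "a ! i \<in> clauses n" "b ! j \<in> clauses n"
    using assms nth_mem[of i a] nth_mem[of j b] by (auto simp: set_pmf_sample clause_seqs_def)
  with assms show ?thesis
    by (simp add: exchange_def set_pmf_sample clause_seqs_def set_update_subsetI)
qed

lemma bij_betw_exchange:
  assumes "2 \<le> n" "i < m" "j < m"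
  shows "bij_betw (exchange i j) (set_pmf (sample n m)) (set_pmf (sample n m))"
proof -
  have "exchange i j \<omega> \<in> set_pmf (sample n m) \<and> exchange i j (exchange i j \<omega>) = \<omega>"
    if "\<omega> \<in> set_pmf (sample n m)" for \<omega>
  proof -
    obtain a b c where \<omega>: "\<omega> = (a, b, c)"
      by (cases \<omega>)
    then have "length a = m" "length b = m"
      using that assms(1) by (auto simp: set_pmf_sample clause_seqs_def)
    then show ?thesis
      using exchange_in_sample[of a b c n m i j] exchange_exchange[of i a j b c] that assms
      by (simp add: \<omega>)
  qed
  then show ?thesis
    by (intro bij_betw_byWitness[where f' = "exchange i j"]) auto
qed

lemma set_Phi1_exchange:
  assumes "i < length a" "j < length b"
  shows "set (Phi1 (exchange i j (a, b, c)) i (Suc j)) = set (Phi1 (a, b, c) (Suc i) j)"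
  using assms
  by (auto simp: exchange_def Phi1_def take_Suc_conv_app_nth take_update_cancel)

lemma Phi2_exchange: "Phi2 (exchange i j \<omega>) i N = Phi2 \<omega> i N"
  by (simp add: exchange_def Phi2_def take_update_cancel split: prod.splits)

lemma expectation_exchange_shared_clause:
  assumes "2 \<le> n" "k < m"
    and H_cong: "\<And>\<Psi> \<Psi>' \<Theta>. set \<Psi> = set \<Psi>' \<Longrightarrow> H \<Psi> \<Theta> = H \<Psi>' \<Theta>"
  shows "measure_pmf.expectation (sample n m)
      (\<lambda>\<omega>. H (Phi1 \<omega> k (m - k)) (Phi2 \<omega> k (m - Suc k))) =
    measure_pmf.expectation (sample n m)
      (\<lambda>\<omega>. (H (Phi1 \<omega> (Suc k) (m - Suc k)) (Phi2 \<omega> k (m - Suc k)) :: real))"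
proof -
  define j where "j = m - Suc k"
  have "m - k = Suc j" "j < m"
    using assms(2) by (simp_all add: j_def)
  have "measure_pmf.expectation (sample n m) (\<lambda>\<omega>. H (Phi1 \<omega> k (Suc j)) (Phi2 \<omega> k j)) =
      measure_pmf.expectation (sample n m)
        (\<lambda>\<omega>. H (Phi1 (exchange k j \<omega>) k (Suc j)) (Phi2 (exchange k j \<omega>) k j))"
    using expectation_sample_bij[OF assms(1) bij_betw_exchange[OF assms(1,2) \<open>j < m\<close>],
        of "\<lambda>\<omega>. H (Phi1 \<omega> k (Suc j)) (Phi2 \<omega> k j)"]
    by simp
  also have "\<dots> = measure_pmf.expectation (sample n m)
      (\<lambda>\<omega>. H (Phi1 \<omega> (Suc k) j) (Phi2 \<omega> k j))"
  proof (rule expectation_pmf_cong)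
    fix \<omega> assume "\<omega> \<in> set_pmf (sample n m)"
    then obtain a b c where "\<omega> = (a, b, c)" "length a = m" "length b = m"
      using assms(1) by (auto simp: set_pmf_sample clause_seqs_def)
    then have set_eq: "set (Phi1 (exchange k j \<omega>) k (Suc j)) = set (Phi1 \<omega> (Suc k) j)"
      using assms(2) \<open>j < m\<close> set_Phi1_exchange by simp
    show "H (Phi1 (exchange k j \<omega>) k (Suc j)) (Phi2 (exchange k j \<omega>) k j) =
        H (Phi1 \<omega> (Suc k) j) (Phi2 \<omega> k j)"
      using H_cong[OF set_eq] by (simp add: Phi2_exchange)
  qed
  finally show ?thesis
    using \<open>m - k = Suc j\<close> by (simp add: j_def)
qed

text \<open>The second identity is the first one for the two formulas with their roles swapped.\<close>

lemma expectation_logZ_exchange_shared_clause: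
  assumes "2 \<le> n" "k < m"
  shows "measure_pmf.expectation (sample n m)
      (\<lambda>\<omega>. logZ n (Phi1 \<omega> k (m - k)) * logZ n (Phi2 \<omega> k (m - Suc k))) =
    measure_pmf.expectation (sample n m)
      (\<lambda>\<omega>. logZ n (Phi1 \<omega> (Suc k) (m - Suc k)) * logZ n (Phi2 \<omega> k (m - Suc k)))"
    (is "?first")
    and "measure_pmf.expectation (sample n m)
      (\<lambda>\<omega>. logZ n (Phi1 \<omega> k (m - Suc k)) * logZ n (Phi2 \<omega> k (m - k))) =
    measure_pmf.expectation (sample n m)
      (\<lambda>\<omega>. logZ n (Phi1 \<omega> k (m - Suc k)) * logZ n (Phi2 \<omega> (Suc k) (m - Suc k)))"
proof -
  let ?E = "measure_pmf.expectation (sample n m)"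
  let ?H = "\<lambda>\<Psi> \<Theta>. logZ n \<Psi> * logZ n \<Theta>"
  show ?first
    by (rule expectation_exchange_shared_clause[OF assms, where H = ?H]) (metis logZ_cong_set)
  have "?E (\<lambda>\<omega>. logZ n (Phi1 \<omega> k (m - Suc k)) * logZ n (Phi2 \<omega> k (m - k))) =
      ?E (\<lambda>\<omega>. logZ n (Phi2 \<omega> k (m - Suc k)) * logZ n (Phi1 \<omega> k (m - k)))"
    by (rule expectation_sample_mirror[OF assms(1), where H = ?H])
  also have "\<dots> = ?E (\<lambda>\<omega>. logZ n (Phi2 \<omega> k (m - Suc k)) * logZ n (Phi1 \<omega> (Suc k) (m - Suc k)))"
    using \<open>?first\<close> by (simp add: mult.commute)
  also have "\<dots> = ?E (\<lambda>\<omega>. logZ n (Phi1 \<omega> k (m - Suc k)) * logZ n (Phi2 \<omega> (Suc k) (m - Suc k)))"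
    by (rule expectation_sample_mirror[OF assms(1), where H = ?H, symmetric])
  finally show "?E (\<lambda>\<omega>. logZ n (Phi1 \<omega> k (m - Suc k)) * logZ n (Phi2 \<omega> k (m - k))) =
      ?E (\<lambda>\<omega>. logZ n (Phi1 \<omega> k (m - Suc k)) * logZ n (Phi2 \<omega> (Suc k) (m - Suc k)))" .
qed

section \<open>The variance as a telescoping sum\<close>

definition joint_moment :: "nat \<Rightarrow> nat \<Rightarrow> nat \<Rightarrow> real" where
  "joint_moment n m M = measure_pmf.expectation (sample n m)
     (\<lambda>\<omega>. logZ n (Phi1 \<omega> M (m - M)) * logZ n (Phi2 \<omega> M (m - M)))"

lemma variance_logZ_eq_joint_moment_diff:
  assumes "2 \<le> n"
  shows "measure_pmf.variance (sample n m) (\<lambda>\<omega>. logZ n (Phi1 \<omega> m 0)) =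
    joint_moment n m m - joint_moment n m 0"
proof -
  let ?E = "measure_pmf.expectation (sample n m)"
  define C where "C = clause_seqs n m"
  define \<mu> where "\<mu> = measure_pmf.expectation (pmf_of_set C) (logZ n)"
  have C: "finite C" "C \<noteq> {}"
    using assms by (simp_all add: C_def finite_clause_seqs clause_seqs_nonempty)
  have sample: "sample n m = pmf_of_set (C \<times> C \<times> C)"
    by (simp add: sample_def C_def)
  have Phi_full: "Phi1 (a, b, c) m 0 = a" "Phi2 (a, b, c) m 0 = a"
    and Phi_private: "Phi1 (a, b, c) 0 m = b" "Phi2 (a, b, c) 0 m = c"
    if "(a, b, c) \<in> set_pmf (sample n m)" for a b c
    using that assms by (auto simp: set_pmf_sample clause_seqs_def Phi1_def Phi2_def)
  have "?E (\<lambda>\<omega>. logZ n (Phi1 \<omega> m 0)) = ?E (\<lambda>(a, bc). logZ n a * 1)"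
    by (rule expectation_pmf_cong) (auto simp: Phi_full)
  also have "\<dots> = \<mu> * measure_pmf.expectation (pmf_of_set (C \<times> C)) (\<lambda>_. 1)"
    unfolding sample \<mu>_def using C by (intro expectation_pmf_of_set_Times) auto
  also have "\<dots> = \<mu>"
    by simp
  finally have mean: "?E (\<lambda>\<omega>. logZ n (Phi1 \<omega> m 0)) = \<mu>" .
  have "joint_moment n m 0 = ?E (\<lambda>(a, bc). 1 * (\<lambda>(b, c). logZ n b * logZ n c) bc)"
    unfolding joint_moment_def by (rule expectation_pmf_cong) (auto simp: Phi_private)
  also have "\<dots> = measure_pmf.expectation (pmf_of_set C) (\<lambda>_. 1) *
      measure_pmf.expectation (pmf_of_set (C \<times> C)) (\<lambda>(b, c). logZ n b * logZ n c)"
    unfolding sample using C by (intro expectation_pmf_of_set_Times) auto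
  also have "\<dots> = \<mu>\<^sup>2"
    unfolding \<mu>_def using C by (simp add: expectation_pmf_of_set_Times power2_eq_square)
  finally have "joint_moment n m 0 = \<mu>\<^sup>2" .
  moreover have "joint_moment n m m = ?E (\<lambda>\<omega>. (logZ n (Phi1 \<omega> m 0))\<^sup>2)"
    unfolding joint_moment_def
    by (rule expectation_pmf_cong) (auto simp: Phi_full power2_eq_square)
  ultimately show ?thesis
    using mean assms by (subst measure_pmf.variance_eq) (simp_all add: integrable_sample)
qed

lemma Delta_minus_Delta'_eq:
  assumes "2 \<le> n" "k < m"
  shows "Delta n m (Suc k) - Delta' n m (Suc k) = joint_moment n m (Suc k) - joint_moment n m k"
proof -
  let ?E = "measure_pmf.expectation (sample n m)"
  define j where "j = m - Suc k"
  have j: "m - k = Suc j" "m - Suc k + 1 = Suc j"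
    using assms(2) by (simp_all add: j_def)
  define A1 where "A1 \<omega> = logZ n (Phi1 \<omega> (Suc k) j)" for \<omega>
  define B1 where "B1 \<omega> = logZ n (Phi1 \<omega> k j)" for \<omega>
  define C1 where "C1 \<omega> = logZ n (Phi1 \<omega> k (Suc j))" for \<omega>
  define A2 where "A2 \<omega> = logZ n (Phi2 \<omega> (Suc k) j)" for \<omega>
  define B2 where "B2 \<omega> = logZ n (Phi2 \<omega> k j)" for \<omega>
  define C2 where "C2 \<omega> = logZ n (Phi2 \<omega> k (Suc j))" for \<omega>
  have Delta: "Delta n m (Suc k) = ?E (\<lambda>\<omega>. (A1 \<omega> - B1 \<omega>) * (A2 \<omega> - B2 \<omega>))"
    unfolding Delta_def j_def[symmetric]
    by (rule expectation_pmf_cong)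
      (simp add: A1_def B1_def A2_def B2_def ln_Z_prune_ratio set_Phi_sample assms(1))
  have Delta': "Delta' n m (Suc k) = ?E (\<lambda>\<omega>. (C1 \<omega> - B1 \<omega>) * (C2 \<omega> - B2 \<omega>))"
    unfolding Delta'_def j(2) j_def[symmetric]
    by (rule expectation_pmf_cong)
      (simp add: C1_def B1_def C2_def B2_def ln_Z_prune_ratio set_Phi_sample assms(1))
  have joint: "joint_moment n m (Suc k) = ?E (\<lambda>\<omega>. A1 \<omega> * A2 \<omega>)"
    "joint_moment n m k = ?E (\<lambda>\<omega>. C1 \<omega> * C2 \<omega>)"
    by (simp_all add: joint_moment_def A1_def A2_def C1_def C2_def j_def j(1))
  have exchange1: "?E (\<lambda>\<omega>. C1 \<omega> * B2 \<omega>) = ?E (\<lambda>\<omega>. A1 \<omega> * B2 \<omega>)"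
    using expectation_logZ_exchange_shared_clause(1)[OF assms]
    by (simp add: A1_def B2_def C1_def j(1) flip: j_def)
  have exchange2: "?E (\<lambda>\<omega>. B1 \<omega> * C2 \<omega>) = ?E (\<lambda>\<omega>. B1 \<omega> * A2 \<omega>)"
    using expectation_logZ_exchange_shared_clause(2)[OF assms]
    by (simp add: B1_def A2_def C2_def j(1) flip: j_def)
  have "Delta n m (Suc k) - Delta' n m (Suc k) =
      ?E (\<lambda>\<omega>. (A1 \<omega> * A2 \<omega> - C1 \<omega> * C2 \<omega>) - (A1 \<omega> * B2 \<omega> - C1 \<omega> * B2 \<omega>)
        - (B1 \<omega> * A2 \<omega> - B1 \<omega> * C2 \<omega>))"
  proof -
    have "Delta n m (Suc k) - Delta' n m (Suc k) =
        ?E (\<lambda>\<omega>. (A1 \<omega> - B1 \<omega>) * (A2 \<omega> - B2 \<omega>) - (C1 \<omega> - B1 \<omega>) * (C2 \<omega> - B2 \<omega>))"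
      unfolding Delta Delta' using assms(1) by (simp add: integrable_sample)
    then show ?thesis
      by (simp add: algebra_simps)
  qed
  also have "\<dots> = joint_moment n m (Suc k) - joint_moment n m k"
    using assms(1) exchange1 exchange2 by (simp add: joint integrable_sample)
  finally show ?thesis .
qed

theorem lemma2p4:
  fixes d :: real and m :: "nat \<Rightarrow> nat" and n :: nat
  assumes "0 < d" and "d < 2"
    and "(\<lambda>k. real (m k)) \<sim>[at_top] (\<lambda>k. d * real k / 2)"
    and "n \<ge> 2"
  shows "measure_pmf.variance (sample n (m n)) (\<lambda>\<omega>. logZ n (Phi1 \<omega> (m n) 0))
         = (\<Sum>M = 1..m n. Delta n (m n) M - Delta' n (m n) M)"
proof -
  have "measure_pmf.variance (sample n (m n)) (\<lambda>\<omega>. logZ n (Phi1 \<omega> (m n) 0)) =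
      joint_moment n (m n) (m n) - joint_moment n (m n) 0"
    using variance_logZ_eq_joint_moment_diff assms(4) by simp
  also have "\<dots> = (\<Sum>M = Suc 0..m n. joint_moment n (m n) M - joint_moment n (m n) (M - 1))"
    by (rule sum_telescope''[symmetric]) simp
  also have "\<dots> = (\<Sum>M = 1..m n. Delta n (m n) M - Delta' n (m n) M)"
  proof (rule sum.cong)
    fix M assume "M \<in> {1..m n}"
    then obtain k where "M = Suc k" "k < m n"
      by (cases M) auto
    then show "joint_moment n (m n) M - joint_moment n (m n) (M - 1) =
        Delta n (m n) M - Delta' n (m n) M"
      using Delta_minus_Delta'_eq assms(4) by simp
  qed simp
  finally show ?thesis .
qed

end
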